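(* Assume (A1)–(A7) and (B0)–(B4) hold, and let $N(n)$ be a sequence of positive integers with $n/N(n)\to0$. Then for any sequence $\{\widehat\gamma_{0,n}\}_{n\ge1}$ of consistent and asymptotically normal estimators of $\gamma_0$, under $H_0$, as $n\to\infty$, for any $\beta\in\mathbb R^{k+1}$, $$\Delta_n(\psi_0,\gamma_0,\beta)=\Delta_n(\psi_0,\widehat\gamma_{0,N(n)},\beta)+o_P(1).$$
   Context: Fix integers $p\ge 1$, $k\ge 0$. For each $n$, let $1=t_0<\dots<t_{k+1}=n$ be integers (depending on $n$), $n_j(n)=t_j-t_{j-1}$, $\omega(t)=(\mathbf 1_{[t_0,t_1)}(t),\dots,\mathbf 1_{[t_k,t_{k+1})}(t))^\top$. Data: $X_t=T_\rho(Z_{t-1})+\gamma^\top\omega(t)+V_\theta(Z_{t-1})\varepsilon_t$, $Z_t=(X_t,\dots,X_{t-p+1})^\top$, $T_\rho,V_\theta:\mathbb R^p\to\mathbb R$ of known form, $\rho\in\Theta\subset\mathbb R^l$, $\theta\in\widetilde\Theta\subset\mathbb R^q$, true $\psi_0=(\rho_0^\top,\theta_0^\top)^\top$, $(\varepsilon_t)$ i.i.d. with density $f$, $\varepsilon_t$ independent of $G_{t-1}=\sigma(Z_1,\dots,Z_{t-1})$. $\varepsilon_t(\psi,\gamma)=(X_t-T_\rho(Z_{t-1})-\gamma^\top\omega(t))/V_\theta(Z_{t-1})$; $\phi_f=f'/f$; $I(f)=\int\phi_f^2f$. $H_0:\gamma=\gamma_0$. Define $\Delta_n(\psi,\gamma,\beta)=n^{-1/2}\sum_{t=1}^n\frac{\beta^\top\omega(t)}{V_\theta(Z_{t-1})}\phi_f[\varepsilon_t(\psi,\gamma)]$.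 $\widehat\gamma_{0,N(n)}$ is the estimator computed at sample size $N(n)$. $\|A\|_M$ is the maximum absolute row sum. Assumptions: (A1) $f$ differentiable, $\int xf=0$, $\int x^2f=1$. (A2) $\phi_f$ differentiable with $c_\phi$-Lipschitz derivative, $0<c_\phi<\infty$. (A3) $f,f'\to0$ at $\pm\infty$. (A4) $\int|\phi_f|^3f<\infty$. (A5) $n_j(n)\to\infty$, $n_j(n)/n\to\alpha_j$. (A6) For each $j$, the $Z_t$ with components indexed in $[t_{j-1},t_j)$ form a stationary ergodic sequence with distribution function $F_j$. (A7) $I(f)\int V_{\theta_0}^{-\ell}dF_j<\infty$, $\ell\le3$. (B0) $V_\theta(z)>\tau>0$ for all $\theta,z$. (B1) $\int\|x\|^{2+\delta}dF_j<\infty$ for some $\delta\ge0$. (B2) $\int|x\phi_f'(x)|f(x)dx<\infty$. (B3) $T_\rho(z)$, $V_\theta(z)$ continuous and differentiable in $\rho\in\mathrm{Int}\,\Theta$, $\theta\in\mathrm{Int}\,\widetilde\Theta$; there are $r_1,r_2$ with $\overline B(\rho_0,r_1)\subset\mathrm{Int}\,\Theta$, $\overline B(\theta_0,r_2)\subset\mathrm{Int}\,\widetilde\Theta$ such that $\sup_{\overline B(\rho_0,r_1)}\|\partial_\rho T_\rho(z)\|$, $\sup_{\overline B(\theta_0,r_2)}|V_\theta(z)|$, $\sup\|\partial_\theta V_\theta(z)\|$, $\sup\|\partial^2_\theta V_\theta(z)\|_M$ are bounded by $\vartheta(z)>0$ with $\int\vartheta^3dF_j<\infty$. (B4) There is a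 consistent estimator $\psi_n$ of $\psi_0$ with $\sqrt n(\psi_n-\psi_0)=n^{-1/2}\sum_{t=1}^n(\Psi_1(Z_{t-1},\psi_0)^\top\Omega_1[\varepsilon_t(\psi_0,\gamma_0)],\Psi_2(Z_{t-1},\psi_0)^\top\Omega_2[\varepsilon_t(\psi_0,\gamma_0)])^\top+o_P(1)$, $\Psi_1\in\mathbb R^l$, $\Psi_2\in\mathbb R^q$, $\Psi=(\Psi_1^\top,\Psi_2^\top)^\top$, $\Omega=(\Omega_1,\Omega_2)^\top$, $\int\|\Psi(x,\psi_0)\|^{2+\delta}dF_j<\infty$, $\int\|\Omega\|^{2+\delta}f<\infty$, $\int\Omega f=0$. *)

theory Defs
  imports "HOL-Probability.Probability"
begin

text \<open>Convergence in probability to a constant (o_P(1) when the constant is 0).\<close>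
definition conv_prob :: "'w measure \<Rightarrow> (nat \<Rightarrow> 'w \<Rightarrow> 'b::real_normed_vector) \<Rightarrow> 'b \<Rightarrow> bool" where
  "conv_prob M Y c \<longleftrightarrow>
     (\<forall>n. Y n \<in> borel_measurable M) \<and>
     (\<forall>e>0. (\<lambda>n. measure M {\<omega>\<in>space M. e < norm (Y n \<omega> - c)}) \<longlonglongrightarrow> 0)"

definition normal_law :: "real \<Rightarrow> real measure" where
  "normal_law v = (if 0 < v then density lborel (\<lambda>x. ennreal (normal_density 0 (sqrt v) x))
                   else return borel 0)"

text \<open>Estimators gh m (vectors in R^(k+1), components 0..k) of g0 which are consistent and
  asymptotically normal: sqrt m (gh m - g0) converges in law to N(0, Sigma) for some
  covariance matrix Sigma (expressed through all linear combinations, Cramer-Wold).\<close>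
definition consistent_asymp_normal ::
  "'w measure \<Rightarrow> nat \<Rightarrow> (nat \<Rightarrow> 'w \<Rightarrow> (nat \<Rightarrow> real)) \<Rightarrow> (nat \<Rightarrow> real) \<Rightarrow> bool" where
  "consistent_asymp_normal M k gh g0 \<longleftrightarrow>
     (\<forall>j\<le>k. conv_prob M (\<lambda>m \<omega>. gh m \<omega> j) (g0 j)) \<and>
     (\<exists>S :: nat \<Rightarrow> nat \<Rightarrow> real.
        (\<forall>i j. S i j = S j i) \<and>
        (\<forall>c. 0 \<le> (\<Sum>i\<le>k. \<Sum>j\<le>k. c i * S i j * c j)) \<and>
        (\<forall>c. weak_conv_m
               (\<lambda>m. distr M borel (\<lambda>\<omega>. sqrt (real m) * (\<Sum>j\<le>k. c j * (gh m \<omega> j - g0 j))))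
               (normal_law (\<Sum>i\<le>k. \<Sum>j\<le>k. c i * S i j * c j))))"

definition shiftseq :: "(nat \<Rightarrow> 'a) \<Rightarrow> nat \<Rightarrow> 'a" where
  "shiftseq x = (\<lambda>s. x (Suc s))"

definition stationary_ergodic :: "(nat \<Rightarrow> 'a) measure \<Rightarrow> bool" where
  "stationary_ergodic P \<longleftrightarrow>
     prob_space P \<and> shiftseq \<in> P \<rightarrow>\<^sub>M P \<and> distr P P shiftseq = P \<and>
     (\<forall>A\<in>sets P. shiftseq -` A \<inter> space P = A \<longrightarrow> emeasure P A = 0 \<or> emeasure P A = 1)"

text \<open>R^p is represented by functions on {..<p} (extensional), with the product Borel sigma-algebra.\<close>
definition Rp :: "nat \<Rightarrow> (nat \<Rightarrow> real) measure" where
  "Rp p = (\<Pi>\<^sub>M i\<in>{..<p}. borel)"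

definition eucl_norm :: "nat \<Rightarrow> (nat \<Rightarrow> real) \<Rightarrow> real" where
  "eucl_norm p z = sqrt (\<Sum>i<p. (z i)\<^sup>2)"

text \<open>Z_t = (X_t, ..., X_{t-p+1}); time is integer-valued (initial values at t <= 0).\<close>
definition Zvec :: "nat \<Rightarrow> (int \<Rightarrow> 'w \<Rightarrow> real) \<Rightarrow> int \<Rightarrow> 'w \<Rightarrow> (nat \<Rightarrow> real)" where
  "Zvec p X t \<omega> = (\<lambda>i\<in>{..<p}. X (t - int i) \<omega>)"

definition omega :: "(nat \<Rightarrow> nat) \<Rightarrow> nat \<Rightarrow> int \<Rightarrow> real" where
  "omega tb j t = (if int (tb j) \<le> t \<and> t < int (tb (Suc j)) then 1 else 0)"

definition shiftterm :: "nat \<Rightarrow> (nat \<Rightarrow> nat) \<Rightarrow> (nat \<Rightarrow> real) \<Rightarrow> int \<Rightarrow> real" where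
  "shiftterm k tb g t = (\<Sum>j\<le>k. g j * omega tb j t)"

definition score :: "(real \<Rightarrow> real) \<Rightarrow> real \<Rightarrow> real" where
  "score f x = deriv f x / f x"

text \<open>Residual eps_t(psi, gamma), psi = (rho, theta).\<close>
definition resid ::
  "nat \<Rightarrow> nat \<Rightarrow> (nat \<Rightarrow> nat) \<Rightarrow> ('r \<Rightarrow> (nat \<Rightarrow> real) \<Rightarrow> real) \<Rightarrow> ('s \<Rightarrow> (nat \<Rightarrow> real) \<Rightarrow> real)
    \<Rightarrow> (int \<Rightarrow> 'w \<Rightarrow> real) \<Rightarrow> 'r \<Rightarrow> 's \<Rightarrow> (nat \<Rightarrow> real) \<Rightarrow> int \<Rightarrow> 'w \<Rightarrow> real" where
  "resid p k tb T V X \<rho> \<theta> g t \<omega> =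
     (X t \<omega> - T \<rho> (Zvec p X (t - 1) \<omega>) - shiftterm k tb g t) / V \<theta> (Zvec p X (t - 1) \<omega>)"

definition Delta ::
  "nat \<Rightarrow> nat \<Rightarrow> (nat \<Rightarrow> nat) \<Rightarrow> ('r \<Rightarrow> (nat \<Rightarrow> real) \<Rightarrow> real) \<Rightarrow> ('s \<Rightarrow> (nat \<Rightarrow> real) \<Rightarrow> real)
    \<Rightarrow> (real \<Rightarrow> real) \<Rightarrow> nat \<Rightarrow> (int \<Rightarrow> 'w \<Rightarrow> real) \<Rightarrow> 'r \<Rightarrow> 's \<Rightarrow> (nat \<Rightarrow> real) \<Rightarrow> (nat \<Rightarrow> real)
    \<Rightarrow> 'w \<Rightarrow> real" where
  "Delta p k tb T V f n X \<rho> \<theta> g \<beta> \<omega> =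
     (1 / sqrt (real n)) *
     (\<Sum>t\<in>{1..int n}. shiftterm k tb \<beta> t / V \<theta> (Zvec p X (t - 1) \<omega>)
                        * score f (resid p k tb T V X \<rho> \<theta> g t \<omega>))"

definition grad :: "(real^'n \<Rightarrow> real) \<Rightarrow> real^'n \<Rightarrow> real^'n" where
  "grad h x = (\<chi> i. frechet_derivative h (at x) (axis i 1))"

definition hess :: "(real^'n \<Rightarrow> real) \<Rightarrow> real^'n \<Rightarrow> real^'n^'n" where
  "hess h x = (\<chi> i j. frechet_derivative (\<lambda>y. grad h y $ i) (at x) (axis j 1))"

definition maxrowsum :: "real^'n^'m \<Rightarrow> real" where
  "maxrowsum A = Max (range (\<lambda>i. \<Sum>j\<in>UNIV. \<bar>A $ i $ j\<bar>))"

definition assm_A :: "(real \<Rightarrow> real) \<Rightarrow> bool" where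
  "assm_A f \<longleftrightarrow>
     \<comment> \<open>(A1)\<close>
     f differentiable_on UNIV \<and>
     integrable lborel (\<lambda>x. x * f x) \<and> (\<integral>x. x * f x \<partial>lborel) = 0 \<and>
     integrable lborel (\<lambda>x. x\<^sup>2 * f x) \<and> (\<integral>x. x\<^sup>2 * f x \<partial>lborel) = 1 \<and>
     \<comment> \<open>(A2)\<close>
     score f differentiable_on UNIV \<and>
     (\<exists>c. 0 < c \<and> c-lipschitz_on UNIV (deriv (score f))) \<and>
     \<comment> \<open>(A3)\<close>
     (f \<longlongrightarrow> 0) at_top \<and> (f \<longlongrightarrow> 0) at_bot \<and>
     (deriv f \<longlongrightarrow> 0) at_top \<and> (deriv f \<longlongrightarrow> 0) at_bot \<and>
     \<comment> \<open>(A4)\<close>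
     integrable lborel (\<lambda>x. \<bar>score f x\<bar> ^ 3 * f x)"

definition assm_A5 :: "nat \<Rightarrow> (nat \<Rightarrow> nat \<Rightarrow> nat) \<Rightarrow> bool" where
  "assm_A5 k tb \<longleftrightarrow>
     (\<forall>j\<in>{1..k+1}. filterlim (\<lambda>n. tb n j - tb n (j - 1)) at_top sequentially \<and>
        (\<exists>\<alpha>. (\<lambda>n. real (tb n j - tb n (j - 1)) / real n) \<longlonglongrightarrow> \<alpha>))"

text \<open>(A6): in sample n, the vectors Z_t all of whose components are indexed in
  [t_{j-1}, t_j), i.e. t_{j-1}+p-1 <= t < t_j, are (the initial segment of) a stationary ergodic
  sequence, whose law P does not depend on n, and F j is its marginal law.\<close>
definition assm_A6 ::
  "'w measure \<Rightarrow> nat \<Rightarrow> nat \<Rightarrow> (nat \<Rightarrow> nat \<Rightarrow> nat) \<Rightarrow> (nat \<Rightarrow> int \<Rightarrow> 'w \<Rightarrow> real)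
    \<Rightarrow> (nat \<Rightarrow> (nat \<Rightarrow> real) measure) \<Rightarrow> bool" where
  "assm_A6 M p k tb X F \<longleftrightarrow>
     (\<forall>j\<in>{1..k+1}. \<exists>P :: (nat \<Rightarrow> nat \<Rightarrow> real) measure.
        sets P = sets (\<Pi>\<^sub>M s\<in>UNIV. Rp p) \<and> stationary_ergodic P \<and>
        F j = distr P (Rp p) (\<lambda>x. x 0) \<and>
        (\<forall>n>k+1. let L = tb n j - tb n (j - 1) + 1 - p in
           distr M (\<Pi>\<^sub>M s\<in>{..<L}. Rp p)
             (\<lambda>\<omega>. \<lambda>s\<in>{..<L}. Zvec p (X n) (int (tb n (j - 1)) + int p - 1 + int s) \<omega>)
           = distr P (\<Pi>\<^sub>M s\<in>{..<L}. Rp p) (\<lambda>x. restrict x {..<L})))"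

definition assm_A7 ::
  "nat \<Rightarrow> (real \<Rightarrow> real) \<Rightarrow> ('s \<Rightarrow> (nat \<Rightarrow> real) \<Rightarrow> real) \<Rightarrow> 's \<Rightarrow> (nat \<Rightarrow> (nat \<Rightarrow> real) measure) \<Rightarrow> bool" where
  "assm_A7 k f V \<theta>0 F \<longleftrightarrow>
     integrable lborel (\<lambda>x. (score f x)\<^sup>2 * f x) \<and>
     (\<forall>j\<in>{1..k+1}. \<forall>l::nat. l \<le> 3 \<longrightarrow> integrable (F j) (\<lambda>z. (1 / V \<theta>0 z) ^ l))"

definition assm_B0 :: "nat \<Rightarrow> 's set \<Rightarrow> ('s \<Rightarrow> (nat \<Rightarrow> real) \<Rightarrow> real) \<Rightarrow> bool" where
  "assm_B0 p \<Theta>' V \<longleftrightarrow> (\<exists>\<tau>>0. \<forall>\<theta>\<in>\<Theta>'. \<forall>z\<in>space (Rp p). \<tau> < V \<theta> z)"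

definition assm_B1 :: "nat \<Rightarrow> nat \<Rightarrow> (nat \<Rightarrow> (nat \<Rightarrow> real) measure) \<Rightarrow> real \<Rightarrow> bool" where
  "assm_B1 p k F \<delta> \<longleftrightarrow> (\<forall>j\<in>{1..k+1}. integrable (F j) (\<lambda>z. eucl_norm p z powr (2 + \<delta>)))"

definition assm_B2 :: "(real \<Rightarrow> real) \<Rightarrow> bool" where
  "assm_B2 f \<longleftrightarrow> integrable lborel (\<lambda>x. \<bar>x * deriv (score f) x\<bar> * f x)"

definition assm_B3 ::
  "nat \<Rightarrow> nat \<Rightarrow> (real^'l) set \<Rightarrow> (real^'q) set \<Rightarrow> (real^'l \<Rightarrow> (nat \<Rightarrow> real) \<Rightarrow> real)
    \<Rightarrow> (real^'q \<Rightarrow> (nat \<Rightarrow> real) \<Rightarrow> real) \<Rightarrow> real^'l \<Rightarrow> real^'q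
    \<Rightarrow> (nat \<Rightarrow> (nat \<Rightarrow> real) measure) \<Rightarrow> bool" where
  "assm_B3 p k \<Theta> \<Theta>' T V \<rho>0 \<theta>0 F \<longleftrightarrow>
     (\<forall>\<rho>\<in>\<Theta>. continuous_on (space (Rp p)) (T \<rho>)) \<and>
     (\<forall>\<theta>\<in>\<Theta>'. continuous_on (space (Rp p)) (V \<theta>)) \<and>
     (\<forall>z\<in>space (Rp p). (\<lambda>\<rho>. T \<rho> z) differentiable_on interior \<Theta> \<and>
                         (\<lambda>\<theta>. V \<theta> z) differentiable_on interior \<Theta>') \<and>
     (\<exists>r1>0. \<exists>r2>0. \<exists>bnd :: (nat \<Rightarrow> real) \<Rightarrow> real.
        cball \<rho>0 r1 \<subseteq> interior \<Theta> \<and> cball \<theta>0 r2 \<subseteq> interior \<Theta>' \<and>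
        (\<forall>z\<in>space (Rp p). 0 < bnd z) \<and>
        (\<forall>j\<in>{1..k+1}. integrable (F j) (\<lambda>z. bnd z ^ 3)) \<and>
        (\<forall>z\<in>space (Rp p).
           (\<forall>\<rho>\<in>cball \<rho>0 r1. norm (grad (\<lambda>\<rho>'. T \<rho>' z) \<rho>) \<le> bnd z) \<and>
           (\<forall>\<theta>\<in>cball \<theta>0 r2. \<bar>V \<theta> z\<bar> \<le> bnd z \<and>
                norm (grad (\<lambda>\<theta>'. V \<theta>' z) \<theta>) \<le> bnd z \<and>
                (\<lambda>\<theta>'. grad (\<lambda>\<theta>''. V \<theta>'' z) \<theta>') differentiable (at \<theta>) \<and>
                maxrowsum (hess (\<lambda>\<theta>'. V \<theta>' z) \<theta>) \<le> bnd z)))"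

text \<open>(B4): psi_n = (rho_n, theta_n) consistent with the stated asymptotic linear expansion;
  Psi = (Psi1, Psi2), Omega = (Omega1, Omega2) with Omega1, Omega2 scalar.\<close>
definition assm_B4 ::
  "'w measure \<Rightarrow> nat \<Rightarrow> nat \<Rightarrow> (nat \<Rightarrow> int \<Rightarrow> 'w \<Rightarrow> real) \<Rightarrow> (nat \<Rightarrow> int \<Rightarrow> 'w \<Rightarrow> real)
    \<Rightarrow> (real \<Rightarrow> real) \<Rightarrow> real^'l \<Rightarrow> real^'q \<Rightarrow> (nat \<Rightarrow> (nat \<Rightarrow> real) measure) \<Rightarrow> real
    \<Rightarrow> (nat \<Rightarrow> 'w \<Rightarrow> (real^'l) \<times> (real^'q)) \<Rightarrow> bool" where
  "assm_B4 M p k X \<epsilon> f \<rho>0 \<theta>0 F \<delta> \<psi>n \<longleftrightarrow>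
     conv_prob M \<psi>n (\<rho>0, \<theta>0) \<and>
     (\<exists>(\<Psi>1 :: (nat \<Rightarrow> real) \<Rightarrow> (real^'l) \<times> (real^'q) \<Rightarrow> real^'l)
        (\<Psi>2 :: (nat \<Rightarrow> real) \<Rightarrow> (real^'l) \<times> (real^'q) \<Rightarrow> real^'q)
        (\<Omega>1 :: real \<Rightarrow> real) (\<Omega>2 :: real \<Rightarrow> real).
        conv_prob M
          (\<lambda>n \<omega>. sqrt (real n) *\<^sub>R (\<psi>n n \<omega> - (\<rho>0, \<theta>0))
                 - (1 / sqrt (real n)) *\<^sub>R
                   (\<Sum>t\<in>{1..int n}.
                      (\<Omega>1 (\<epsilon> n t \<omega>) *\<^sub>R \<Psi>1 (Zvec p (X n) (t - 1) \<omega>) (\<rho>0, \<theta>0),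
                       \<Omega>2 (\<epsilon> n t \<omega>) *\<^sub>R \<Psi>2 (Zvec p (X n) (t - 1) \<omega>) (\<rho>0, \<theta>0))))
          0 \<and>
        (\<forall>j\<in>{1..k+1}. integrable (F j)
           (\<lambda>z. norm (\<Psi>1 z (\<rho>0, \<theta>0), \<Psi>2 z (\<rho>0, \<theta>0)) powr (2 + \<delta>))) \<and>
        integrable lborel (\<lambda>x. norm (\<Omega>1 x, \<Omega>2 x) powr (2 + \<delta>) * f x) \<and>
        (\<integral>x. \<Omega>1 x * f x \<partial>lborel) = 0 \<and> (\<integral>x. \<Omega>2 x * f x \<partial>lborel) = 0)"

text \<open>Data generating process under H0 (gamma = g0) for the n-th sample, breaks tb n, with
  i.i.d. innovations of density f independent of G_{t-1} = sigma(Z_1, ..., Z_{t-1}).\<close>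
definition model ::
  "'w measure \<Rightarrow> nat \<Rightarrow> nat \<Rightarrow> (nat \<Rightarrow> nat \<Rightarrow> nat) \<Rightarrow> ('r \<Rightarrow> (nat \<Rightarrow> real) \<Rightarrow> real)
    \<Rightarrow> ('s \<Rightarrow> (nat \<Rightarrow> real) \<Rightarrow> real) \<Rightarrow> 'r \<Rightarrow> 's \<Rightarrow> (nat \<Rightarrow> real) \<Rightarrow> (real \<Rightarrow> real)
    \<Rightarrow> (nat \<Rightarrow> int \<Rightarrow> 'w \<Rightarrow> real) \<Rightarrow> (nat \<Rightarrow> int \<Rightarrow> 'w \<Rightarrow> real) \<Rightarrow> bool" where
  "model M p k tb T V \<rho>0 \<theta>0 g0 f X \<epsilon> \<longleftrightarrow>
     prob_space M \<and> (\<forall>x. 0 \<le> f x) \<and>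
     (\<forall>n>k+1. tb n 0 = 1 \<and> tb n (k+1) = n \<and> (\<forall>j\<le>k. tb n j < tb n (Suc j))) \<and>
     (\<forall>n t. X n t \<in> borel_measurable M) \<and>
     (\<forall>n. \<forall>t\<in>{1..int n}. \<forall>\<omega>\<in>space M.
        X n t \<omega> = T \<rho>0 (Zvec p (X n) (t - 1) \<omega>) + shiftterm k (tb n) g0 t
                   + V \<theta>0 (Zvec p (X n) (t - 1) \<omega>) * \<epsilon> n t \<omega>) \<and>
     (\<forall>n. prob_space.indep_vars M (\<lambda>_. borel) (\<epsilon> n) {1..int n}) \<and>
     (\<forall>n. \<forall>t\<in>{1..int n}. distributed M lborel (\<epsilon> n t) (\<lambda>x. ennreal (f x))) \<and>
     (\<forall>n. \<forall>t\<in>{1..int n}.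
        let S = (if 2 \<le> t then {2 - int p .. t - 1} else {}) in
        prob_space.indep_set M
          (sets (vimage_algebra (space M) (\<epsilon> n t) borel))
          (sets (vimage_algebra (space M) (\<lambda>\<omega>. \<lambda>s\<in>S. X n s \<omega>) (\<Pi>\<^sub>M s\<in>S. borel))))"

end

(* Under H0 the residual at gamma is eps_t + (gamma0 - gamma)' omega(t) / V_t, so the difference
   of the two statistics is n^(-1/2) sum_t a_t (phi(eps_t) - phi(eps_t + h_t)) with
   |a_t| <= |beta|_1 / tau and |h_t| <= |gamma - gamma0|_1 / tau.  As phi' is Lipschitz,
   |phi(x + h) - phi(x)| <= |h| (|phi'(0)| + c (|x| + |h|)), hence the difference is at most
   sqrt(n / N(n)) W_n, where W_n is a polynomial in sqrt(N(n)) |gamma_hat_N(n) - gamma0|_1 and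
   n^(-1) sum_t |eps_t|.  Both are bounded in probability, the first by asymptotic normality and the
   second by Markov's inequality, while sqrt(n / N(n)) -> 0.  Only (A1), (A2), (B0), the
   continuity part of (B3) and the model equations are needed. *)

theory Submission
  imports Defs
begin

section \<open>Boundedness in probability\<close>

definition bounded_in_prob :: "'w measure \<Rightarrow> (nat \<Rightarrow> 'w \<Rightarrow> real) \<Rightarrow> bool" where
  "bounded_in_prob M Y \<longleftrightarrow>
     (\<forall>n. Y n \<in> borel_measurable M) \<and>
     (\<forall>\<eta>>0. \<exists>K. eventually (\<lambda>n. measure M {\<omega>\<in>space M. K < \<bar>Y n \<omega>\<bar>} < \<eta>) sequentially)"

lemma bounded_in_probI:
  assumes "\<And>n. Y n \<in> borel_measurable M"
    and "\<And>\<eta>. 0 < \<eta> \<Longrightarrow> \<exists>K. eventually (\<lambda>n. measure M {\<omega>\<in>space M. K < \<bar>Y n \<omega>\<bar>} < \<eta>) sequentially"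
  shows "bounded_in_prob M Y"
  using assms unfolding bounded_in_prob_def by blast

lemma bounded_in_prob_measurable:
  "bounded_in_prob M Y \<Longrightarrow> Y n \<in> borel_measurable M"
  unfolding bounded_in_prob_def by blast

lemma bounded_in_probE:
  assumes "bounded_in_prob M Y" and "0 < \<eta>"
  obtains K where "eventually (\<lambda>n. measure M {\<omega>\<in>space M. K < \<bar>Y n \<omega>\<bar>} < \<eta>) sequentially"
  using assms unfolding bounded_in_prob_def by blast

lemma bounded_in_prob_const: "bounded_in_prob M (\<lambda>n \<omega>. c)"
  by (intro bounded_in_probI exI[of _ "\<bar>c\<bar>"]) auto

lemma bounded_in_prob_abs:
  "bounded_in_prob M Y \<Longrightarrow> bounded_in_prob M (\<lambda>n \<omega>. \<bar>Y n \<omega>\<bar>)"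
  unfolding bounded_in_prob_def by (auto intro!: borel_measurable_abs)

lemma bounded_in_prob_reindex:
  assumes "bounded_in_prob M Y" and "filterlim N at_top sequentially"
  shows "bounded_in_prob M (\<lambda>n. Y (N n))"
proof (rule bounded_in_probI)
  fix \<eta> :: real assume "0 < \<eta>"
  with assms(1) obtain K where "eventually (\<lambda>m. measure M {\<omega>\<in>space M. K < \<bar>Y m \<omega>\<bar>} < \<eta>) sequentially"
    by (rule bounded_in_probE)
  then show "\<exists>K. eventually (\<lambda>n. measure M {\<omega>\<in>space M. K < \<bar>Y (N n) \<omega>\<bar>} < \<eta>) sequentially"
    using assms(2) by (blast dest: eventually_compose_filterlim)
qed (use assms(1) in \<open>rule bounded_in_prob_measurable\<close>)

lemma bounded_in_prob_if_bounded_by: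
  assumes M: "prob_space M"
    and X: "bounded_in_prob M X" and Y: "bounded_in_prob M Y"
    and Z: "\<And>n. Z n \<in> borel_measurable M"
    and bound: "\<And>K1 K2. \<exists>K. \<forall>n. \<forall>\<omega>\<in>space M.
                  \<bar>X n \<omega>\<bar> \<le> K1 \<longrightarrow> \<bar>Y n \<omega>\<bar> \<le> K2 \<longrightarrow> \<bar>Z n \<omega>\<bar> \<le> K"
  shows "bounded_in_prob M Z"
proof (rule bounded_in_probI[OF Z])
  interpret M: prob_space M by (fact M)
  fix \<eta> :: real assume "0 < \<eta>"
  then have "0 < \<eta> / 2" by simp
  obtain K1 where K1: "eventually (\<lambda>n. measure M {\<omega>\<in>space M. K1 < \<bar>X n \<omega>\<bar>} < \<eta> / 2) sequentially"
    using X \<open>0 < \<eta> / 2\<close> by (rule bounded_in_probE)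
  obtain K2 where K2: "eventually (\<lambda>n. measure M {\<omega>\<in>space M. K2 < \<bar>Y n \<omega>\<bar>} < \<eta> / 2) sequentially"
    using Y \<open>0 < \<eta> / 2\<close> by (rule bounded_in_probE)
  obtain K where K: "\<And>n \<omega>. \<omega> \<in> space M \<Longrightarrow> \<bar>X n \<omega>\<bar> \<le> K1 \<Longrightarrow> \<bar>Y n \<omega>\<bar> \<le> K2 \<Longrightarrow> \<bar>Z n \<omega>\<bar> \<le> K"
    using bound by blast
  have "eventually (\<lambda>n. measure M {\<omega>\<in>space M. K < \<bar>Z n \<omega>\<bar>} < \<eta>) sequentially"
    using K1 K2
  proof eventually_elim
    case (elim n)
    have [measurable]: "X n \<in> borel_measurable M" "Y n \<in> borel_measurable M"
      using X Y by (auto intro: bounded_in_prob_measurable)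
    have "{\<omega>\<in>space M. K < \<bar>Z n \<omega>\<bar>}
          \<subseteq> {\<omega>\<in>space M. K1 < \<bar>X n \<omega>\<bar>} \<union> {\<omega>\<in>space M. K2 < \<bar>Y n \<omega>\<bar>}"
    proof (intro subsetI)
      fix \<omega> assume "\<omega> \<in> {\<omega>\<in>space M. K < \<bar>Z n \<omega>\<bar>}"
      then have "\<omega> \<in> space M" "\<not> (\<bar>X n \<omega>\<bar> \<le> K1 \<and> \<bar>Y n \<omega>\<bar> \<le> K2)"
        using K by (auto simp: not_le[symmetric])
      then show "\<omega> \<in> {\<omega>\<in>space M. K1 < \<bar>X n \<omega>\<bar>} \<union> {\<omega>\<in>space M. K2 < \<bar>Y n \<omega>\<bar>}"
        by auto
    qed
    then have "measure M {\<omega>\<in>space M. K < \<bar>Z n \<omega>\<bar>}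
          \<le> measure M ({\<omega>\<in>space M. K1 < \<bar>X n \<omega>\<bar>} \<union> {\<omega>\<in>space M. K2 < \<bar>Y n \<omega>\<bar>})"
      by (intro M.finite_measure_mono) auto
    also have "\<dots> \<le> measure M {\<omega>\<in>space M. K1 < \<bar>X n \<omega>\<bar>} + measure M {\<omega>\<in>space M. K2 < \<bar>Y n \<omega>\<bar>}"
      by (intro measure_Un_le) auto
    finally show ?case using elim by linarith
  qed
  then show "\<exists>K. eventually (\<lambda>n. measure M {\<omega>\<in>space M. K < \<bar>Z n \<omega>\<bar>} < \<eta>) sequentially" ..
qed

lemma bounded_in_prob_add:
  assumes "prob_space M" "bounded_in_prob M X" "bounded_in_prob M Y"
  shows "bounded_in_prob M (\<lambda>n \<omega>. X n \<omega> + Y n \<omega>)"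
proof (rule bounded_in_prob_if_bounded_by[OF assms])
  fix K1 K2
  show "\<exists>K. \<forall>n. \<forall>\<omega>\<in>space M. \<bar>X n \<omega>\<bar> \<le> K1 \<longrightarrow> \<bar>Y n \<omega>\<bar> \<le> K2 \<longrightarrow> \<bar>X n \<omega> + Y n \<omega>\<bar> \<le> K"
    by (intro exI[of _ "K1 + K2"]) auto
qed (use assms(2,3) in \<open>auto intro!: borel_measurable_add simp: bounded_in_prob_def\<close>)

lemma bounded_in_prob_mult:
  assumes "prob_space M" "bounded_in_prob M X" "bounded_in_prob M Y"
  shows "bounded_in_prob M (\<lambda>n \<omega>. X n \<omega> * Y n \<omega>)"
proof (rule bounded_in_prob_if_bounded_by[OF assms])
  fix K1 K2
  show "\<exists>K. \<forall>n. \<forall>\<omega>\<in>space M. \<bar>X n \<omega>\<bar> \<le> K1 \<longrightarrow> \<bar>Y n \<omega>\<bar> \<le> K2 \<longrightarrow> \<bar>X n \<omega> * Y n \<omega>\<bar> \<le> K"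
    by (intro exI[of _ "K1 * K2"]) (auto simp: abs_mult intro: mult_mono order_trans[OF abs_ge_zero])
qed (use assms(2,3) in \<open>auto intro!: borel_measurable_times simp: bounded_in_prob_def\<close>)

lemma bounded_in_prob_sum:
  assumes "prob_space M" and "\<And>i. i \<in> I \<Longrightarrow> bounded_in_prob M (Y i)"
  shows "bounded_in_prob M (\<lambda>n \<omega>. \<Sum>i\<in>I. Y i n \<omega>)"
  using assms(2)
proof (induction I rule: infinite_finite_induct)
  case (insert i I)
  then show ?case by (simp add: bounded_in_prob_add[OF assms(1)])
qed (simp_all add: bounded_in_prob_const)

lemma bounded_in_prob_integral_bound:
  assumes M: "prob_space M"
    and int: "\<And>n. integrable M (Y n)" and bound: "\<And>n. (\<integral>\<omega>. \<bar>Y n \<omega>\<bar> \<partial>M) \<le> C"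
  shows "bounded_in_prob M Y"
proof (rule bounded_in_probI)
  interpret M: prob_space M by (fact M)
  show "Y n \<in> borel_measurable M" for n using int by (rule borel_measurable_integrable)
  fix \<eta> :: real assume \<eta>: "0 < \<eta>"
  define K where "K = 2 * \<bar>C\<bar> / \<eta> + 1"
  have "0 < K"
    unfolding K_def using \<eta> by (simp add: add_nonneg_pos)
  moreover have "\<bar>C\<bar> < \<eta> * K"
    unfolding K_def using \<eta> by (auto simp: field_simps intro!: add_pos_nonneg)
  ultimately have K: "0 < K" "\<bar>C\<bar> / K < \<eta>"
    by (simp_all add: pos_divide_less_eq mult.commute)
  have "measure M {\<omega>\<in>space M. K < \<bar>Y n \<omega>\<bar>} < \<eta>" for n
  proof -
    have [measurable]: "Y n \<in> borel_measurable M" using int by (rule borel_measurable_integrable)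
    have "measure M {\<omega>\<in>space M. K < \<bar>Y n \<omega>\<bar>} \<le> measure M {\<omega>\<in>space M. K \<le> \<bar>Y n \<omega>\<bar>}"
      by (intro M.finite_measure_mono) auto
    also have "\<dots> \<le> (\<integral>\<omega>. \<bar>Y n \<omega>\<bar> \<partial>M) / K"
      using int K by (intro integral_Markov_inequality_measure) auto
    also have "\<dots> \<le> \<bar>C\<bar> / K"
      using bound[of n] K by (intro divide_right_mono) auto
    finally show ?thesis using K by linarith
  qed
  then show "\<exists>K. eventually (\<lambda>n. measure M {\<omega>\<in>space M. K < \<bar>Y n \<omega>\<bar>} < \<eta>) sequentially"
    by (intro exI[of _ K] always_eventually allI)
qed

lemma bounded_in_prob_weak_conv:
  assumes M: "prob_space M" and Y: "\<And>n. Y n \<in> borel_measurable M"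
    and \<mu>: "real_distribution \<mu>"
    and conv: "weak_conv_m (\<lambda>n. distr M borel (Y n)) \<mu>"
  shows "bounded_in_prob M Y"
proof (rule bounded_in_probI[OF Y])
  interpret M: prob_space M by (fact M)
  interpret \<mu>: real_distribution \<mu> by (fact \<mu>)
  fix \<eta> :: real assume \<eta>: "0 < \<eta>"
  have "eventually (\<lambda>x. 1 - \<eta> / 2 < cdf \<mu> x) at_top"
    using \<mu>.cdf_lim_at_top_prob \<eta> by (intro order_tendstoD) auto
  moreover have "eventually (\<lambda>x. cdf \<mu> x < \<eta> / 2) at_bot"
    using \<mu>.cdf_lim_at_bot \<eta> by (intro order_tendstoD) auto
  then have "eventually (\<lambda>x. cdf \<mu> (- x) < \<eta> / 2) at_top"
    using filterlim_uminus_at_bot_at_top eventually_compose_filterlim by blast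
  ultimately have "eventually (\<lambda>x. 1 - \<eta> / 2 < cdf \<mu> x \<and> cdf \<mu> (- x) < \<eta> / 2) at_top"
    by (rule eventually_conj)
  then obtain x0 where x0: "\<And>x. x0 \<le> x \<Longrightarrow> 1 - \<eta> / 2 < cdf \<mu> x \<and> cdf \<mu> (- x) < \<eta> / 2"
    unfolding eventually_at_top_linorder by blast
  \<comment> \<open>x and -x must be continuity points of cdf \<mu>\<close>
  define atoms where "atoms = {x. 0 < measure \<mu> {x}}"
  have "countable (atoms \<union> uminus ` atoms)"
    unfolding atoms_def using \<mu>.countable_atoms by blast
  then obtain x where x: "x0 < x" "x \<notin> atoms" "- x \<notin> atoms"
    using open_minus_countable[of "atoms \<union> uminus ` atoms" "{x0<..}"] by force
  have "measure \<mu> {x} = 0" "measure \<mu> {- x} = 0"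
    using x(2,3) measure_nonneg[of \<mu>] unfolding atoms_def by (auto simp: less_le)
  have cdf_Y: "cdf (distr M borel (Y n)) y = measure M {\<omega>\<in>space M. Y n \<omega> \<le> y}" for n y
    unfolding cdf_def using Y by (subst measure_distr) (auto intro!: arg_cong[where f="measure M"])
  have "(\<lambda>n. measure M {\<omega>\<in>space M. Y n \<omega> \<le> x}) \<longlonglongrightarrow> cdf \<mu> x"
    using conv \<open>measure \<mu> {x} = 0\<close> \<mu>.isCont_cdf unfolding weak_conv_m_def weak_conv_def cdf_Y by blast
  then have upper: "eventually (\<lambda>n. 1 - \<eta> / 2 < measure M {\<omega>\<in>space M. Y n \<omega> \<le> x}) sequentially"
    using x0[of x] x(1) by (intro order_tendstoD) auto
  have "(\<lambda>n. measure M {\<omega>\<in>space M. Y n \<omega> \<le> - x}) \<longlonglongrightarrow> cdf \<mu> (- x)"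
    using conv \<open>measure \<mu> {- x} = 0\<close> \<mu>.isCont_cdf unfolding weak_conv_m_def weak_conv_def cdf_Y by blast
  then have lower: "eventually (\<lambda>n. measure M {\<omega>\<in>space M. Y n \<omega> \<le> - x} < \<eta> / 2) sequentially"
    using x0[of x] x(1) by (intro order_tendstoD) auto
  have "eventually (\<lambda>n. measure M {\<omega>\<in>space M. x < \<bar>Y n \<omega>\<bar>} < \<eta>) sequentially"
    using upper lower
  proof eventually_elim
    case (elim n)
    have [measurable]: "Y n \<in> borel_measurable M" by (fact Y)
    have "measure M {\<omega>\<in>space M. x < \<bar>Y n \<omega>\<bar>}
          \<le> measure M ({\<omega>\<in>space M. Y n \<omega> \<le> - x} \<union> (space M - {\<omega>\<in>space M. Y n \<omega> \<le> x}))"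
      by (intro M.finite_measure_mono) auto
    also have "\<dots> \<le> measure M {\<omega>\<in>space M. Y n \<omega> \<le> - x} + measure M (space M - {\<omega>\<in>space M. Y n \<omega> \<le> x})"
      by (intro measure_Un_le) auto
    also have "measure M (space M - {\<omega>\<in>space M. Y n \<omega> \<le> x}) = 1 - measure M {\<omega>\<in>space M. Y n \<omega> \<le> x}"
      by (subst M.prob_compl) auto
    finally show ?case using elim by linarith
  qed
  then show "\<exists>K. eventually (\<lambda>n. measure M {\<omega>\<in>space M. K < \<bar>Y n \<omega>\<bar>} < \<eta>) sequentially" ..
qed

lemma conv_prob_zero_if_vanishing_times_bounded:
  assumes M: "prob_space M" and Z: "\<And>n. Z n \<in> borel_measurable M"
    and W: "bounded_in_prob M W"
    and r: "r \<longlonglongrightarrow> 0" "\<And>n. 0 \<le> r n"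
    and bound: "\<And>n \<omega>. \<omega> \<in> space M \<Longrightarrow> \<bar>Z n \<omega>\<bar> \<le> r n * W n \<omega>"
  shows "conv_prob M Z (0::real)"
  unfolding conv_prob_def
proof (intro conjI allI impI Z)
  interpret M: prob_space M by (fact M)
  fix e :: real assume e: "0 < e"
  show "(\<lambda>n. measure M {\<omega>\<in>space M. e < norm (Z n \<omega> - 0)}) \<longlonglongrightarrow> 0"
  proof (rule order_tendstoI)
    fix \<eta> :: real assume "0 < \<eta>"
    with W obtain K where K: "eventually (\<lambda>n. measure M {\<omega>\<in>space M. K < \<bar>W n \<omega>\<bar>} < \<eta>) sequentially"
      by (rule bounded_in_probE)
    have "eventually (\<lambda>n. r n * K < e) sequentially"
      using tendsto_mult_right_zero[OF r(1), of K] e by (intro order_tendstoD) (auto simp: mult.commute)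
    with K show "eventually (\<lambda>n. measure M {\<omega>\<in>space M. e < norm (Z n \<omega> - 0)} < \<eta>) sequentially"
    proof eventually_elim
      case (elim n)
      have [measurable]: "W n \<in> borel_measurable M" using W by (rule bounded_in_prob_measurable)
      have "\<bar>Z n \<omega>\<bar> \<le> r n * K" if "\<omega> \<in> space M" "\<bar>W n \<omega>\<bar> \<le> K" for \<omega>
        using bound[OF that(1), of n] mult_left_mono[OF order_trans[OF abs_ge_self that(2)] r(2)[of n]]
        by linarith
      then have "{\<omega>\<in>space M. e < norm (Z n \<omega> - 0)} \<subseteq> {\<omega>\<in>space M. K < \<bar>W n \<omega>\<bar>}"
        using elim by force
      then have "measure M {\<omega>\<in>space M. e < norm (Z n \<omega> - 0)} \<le> measure M {\<omega>\<in>space M. K < \<bar>W n \<omega>\<bar>}"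
        by (intro M.finite_measure_mono) auto
      with elim show ?case by linarith
    qed
  qed (intro always_eventually allI less_le_trans[OF _ measure_nonneg])
qed

section \<open>The estimation error and the innovations\<close>

lemma real_distribution_normal_law: "real_distribution (normal_law v)"
proof (cases "0 < v")
  case True
  then have "prob_space (density lborel (\<lambda>x. ennreal (normal_density 0 (sqrt v) x)))"
    by (intro prob_space_normal_density) simp
  with True show ?thesis
    unfolding normal_law_def real_distribution_def real_distribution_axioms_def by simp
next
  case False
  then show ?thesis
    unfolding normal_law_def real_distribution_def real_distribution_axioms_def
    by (simp add: prob_space_return)
qed

lemma consistent_asymp_normal_root_n_bounded:
  assumes M: "prob_space M" and est: "consistent_asymp_normal M k \<gamma>h \<gamma>0" and j: "j \<le> k"
  shows "bounded_in_prob M (\<lambda>m \<omega>. sqrt (real m) * (\<gamma>h m \<omega> j - \<gamma>0 j))"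
proof -
  have "(\<lambda>\<omega>. \<gamma>h m \<omega> j) \<in> borel_measurable M" for m
    using est j unfolding consistent_asymp_normal_def conv_prob_def by auto
  then have meas: "(\<lambda>\<omega>. sqrt (real m) * (\<gamma>h m \<omega> j - \<gamma>0 j)) \<in> borel_measurable M" for m
    by measurable
  obtain S where S: "\<And>c. weak_conv_m
      (\<lambda>m. distr M borel (\<lambda>\<omega>. sqrt (real m) * (\<Sum>i\<le>k. c i * (\<gamma>h m \<omega> i - \<gamma>0 i))))
      (normal_law (\<Sum>i\<le>k. \<Sum>l\<le>k. c i * S i l * c l))"
    using est unfolding consistent_asymp_normal_def by blast
  have pick: "(\<Sum>i\<le>k. (if i = j then 1 else 0) * x i) = x j" for x :: "nat \<Rightarrow> real"
    using j by (subst sum.remove[of _ j]) auto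
  show ?thesis
    using S[of "\<lambda>i. if i = j then 1 else 0"] unfolding pick
    by (rule bounded_in_prob_weak_conv[OF M meas real_distribution_normal_law])
qed

lemma bounded_in_prob_mean_abs_innovations:
  assumes M: "prob_space M"
    and \<epsilon>: "\<And>n t. t \<in> {1..int n} \<Longrightarrow> distributed M lborel (\<epsilon> n t) (\<lambda>x. ennreal (f x))"
    and f: "\<And>x. 0 \<le> f x" "integrable lborel (\<lambda>x. x * f x)"
  shows "bounded_in_prob M (\<lambda>n \<omega>. (\<Sum>t\<in>{1..int n}. \<bar>\<epsilon> n t \<omega>\<bar>) / real n)"
proof (rule bounded_in_prob_integral_bound[OF M])
  define E where "E = (\<integral>x. f x * \<bar>x\<bar> \<partial>lborel)"
  have "integrable lborel (\<lambda>x. \<bar>x * f x\<bar>)"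
    using f(2) by (rule integrable_abs)
  then have "integrable lborel (\<lambda>x. f x * \<bar>x\<bar>)"
    using f(1) by (simp add: abs_mult mult.commute)
  then have int: "integrable M (\<lambda>\<omega>. \<bar>\<epsilon> n t \<omega>\<bar>)" and mean: "(\<integral>\<omega>. \<bar>\<epsilon> n t \<omega>\<bar> \<partial>M) = E"
    if "t \<in> {1..int n}" for n t
    using distributed_integrable[OF \<epsilon>[OF that], of abs] distributed_integral[OF \<epsilon>[OF that], of abs] f(1)
    by (simp_all add: E_def)
  show "integrable M (\<lambda>\<omega>. (\<Sum>t\<in>{1..int n}. \<bar>\<epsilon> n t \<omega>\<bar>) / real n)" for n
    using int by (intro integrable_divide Bochner_Integration.integrable_sum) auto
  show "(\<integral>\<omega>. \<bar>(\<Sum>t\<in>{1..int n}. \<bar>\<epsilon> n t \<omega>\<bar>) / real n\<bar> \<partial>M) \<le> E" for n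
  proof -
    have "(\<integral>\<omega>. \<bar>(\<Sum>t\<in>{1..int n}. \<bar>\<epsilon> n t \<omega>\<bar>) / real n\<bar> \<partial>M)
        = (\<Sum>t\<in>{1..int n}. \<integral>\<omega>. \<bar>\<epsilon> n t \<omega>\<bar> \<partial>M) / real n"
      using int by (simp add: sum_nonneg Bochner_Integration.integral_sum)
    also have "\<dots> = (if n = 0 then 0 else E)"
      using mean by simp
    also have "\<dots> \<le> E"
      unfolding E_def using f(1) by (auto intro: integral_nonneg_AE)
    finally show ?thesis .
  qed
qed

section \<open>Increments of the score\<close>

lemma abs_diff_le_of_lipschitz_deriv:
  fixes \<phi> :: "real \<Rightarrow> real"
  assumes d: "\<phi> differentiable_on UNIV" and L: "c-lipschitz_on UNIV (deriv \<phi>)"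
  shows "\<bar>\<phi> (x + h) - \<phi> x\<bar> \<le> \<bar>h\<bar> * (\<bar>deriv \<phi> 0\<bar> + c * (\<bar>x\<bar> + \<bar>h\<bar>))"
proof -
  have D: "DERIV \<phi> y :> deriv \<phi> y" for y
    using d by (simp add: DERIV_deriv_iff_real_differentiable differentiable_on_def)
  have "0 \<le> c" using L lipschitz_on_nonneg by blast
  have deriv_growth: "\<bar>deriv \<phi> y\<bar> \<le> \<bar>deriv \<phi> 0\<bar> + c * \<bar>y\<bar>" for y
    using lipschitz_onD[OF L, of y 0] by (simp add: dist_real_def)
  have deriv_le: "\<bar>deriv \<phi> y\<bar> \<le> \<bar>deriv \<phi> 0\<bar> + c * (\<bar>x\<bar> + \<bar>h\<bar>)" if "\<bar>y\<bar> \<le> \<bar>x\<bar> + \<bar>h\<bar>" for y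
    using deriv_growth[of y] mult_left_mono[OF that \<open>0 \<le> c\<close>] by linarith
  have chord: "\<bar>\<phi> v - \<phi> u\<bar> \<le> (v - u) * (\<bar>deriv \<phi> 0\<bar> + c * (\<bar>x\<bar> + \<bar>h\<bar>))"
    if "u < v" "\<bar>u\<bar> \<le> \<bar>x\<bar> + \<bar>h\<bar>" "\<bar>v\<bar> \<le> \<bar>x\<bar> + \<bar>h\<bar>" for u v
  proof -
    obtain z where "u < z" "z < v" "\<phi> v - \<phi> u = (v - u) * deriv \<phi> z"
      using MVT2[OF \<open>u < v\<close> D] by blast
    with that deriv_le[of z] show ?thesis
      by (simp add: abs_mult mult_left_mono)
  qed
  consider "h = 0" | "0 < h" | "h < 0" by linarith
  then show ?thesis
  proof cases
    case 2 then show ?thesis using chord[of x "x + h"] by simp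
  next
    case 3 then show ?thesis using chord[of "x + h" x] by (simp add: abs_minus_commute)
  qed simp
qed

lemma abs_sum_increments_le:
  fixes \<phi> :: "real \<Rightarrow> real"
  assumes incr: "\<And>x h. \<bar>\<phi> (x + h) - \<phi> x\<bar> \<le> \<bar>h\<bar> * (L + c * (\<bar>x\<bar> + \<bar>h\<bar>))"
    and "0 \<le> L" "0 \<le> c"
    and a: "\<And>t. t \<in> I \<Longrightarrow> \<bar>a t\<bar> \<le> A" and h: "\<And>t. t \<in> I \<Longrightarrow> \<bar>h t\<bar> \<le> H"
  shows "\<bar>\<Sum>t\<in>I. a t * (\<phi> (e t) - \<phi> (e t + h t))\<bar>
          \<le> A * H * (real (card I) * (L + c * H) + c * (\<Sum>t\<in>I. \<bar>e t\<bar>))"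
proof -
  have "\<bar>a t * (\<phi> (e t) - \<phi> (e t + h t))\<bar> \<le> A * H * (L + c * H + c * \<bar>e t\<bar>)" if "t \<in> I" for t
  proof -
    have "\<bar>\<phi> (e t) - \<phi> (e t + h t)\<bar> \<le> \<bar>h t\<bar> * (L + c * (\<bar>e t\<bar> + \<bar>h t\<bar>))"
      using incr[of "e t" "h t"] by (simp add: abs_minus_commute)
    also have "\<dots> \<le> H * (L + c * H + c * \<bar>e t\<bar>)"
    proof (rule mult_mono)
      show "L + c * (\<bar>e t\<bar> + \<bar>h t\<bar>) \<le> L + c * H + c * \<bar>e t\<bar>"
        using mult_left_mono[OF h[OF that] \<open>0 \<le> c\<close>] by (simp add: algebra_simps)
    qed (use h[OF that] assms(2,3) in auto)
    finally have "\<bar>\<phi> (e t) - \<phi> (e t + h t)\<bar> \<le> H * (L + c * H + c * \<bar>e t\<bar>)" .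
    with a[OF that] have "\<bar>a t\<bar> * \<bar>\<phi> (e t) - \<phi> (e t + h t)\<bar> \<le> A * (H * (L + c * H + c * \<bar>e t\<bar>))"
      by (intro mult_mono) (auto intro: order_trans[OF abs_ge_zero])
    then show ?thesis
      by (simp add: abs_mult mult.assoc)
  qed
  then have "\<bar>\<Sum>t\<in>I. a t * (\<phi> (e t) - \<phi> (e t + h t))\<bar> \<le> (\<Sum>t\<in>I. A * H * (L + c * H + c * \<bar>e t\<bar>))"
    by (intro order_trans[OF sum_abs] sum_mono)
  also have "\<dots> = A * H * (real (card I) * (L + c * H) + c * (\<Sum>t\<in>I. \<bar>e t\<bar>))"
    by (simp add: sum_distrib_left sum.distrib algebra_simps)
  finally show ?thesis .
qed

section \<open>The statistic Delta under the null hypothesis\<close>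

lemma Zvec_in_space_Rp: "Zvec p Y t \<omega> \<in> space (Rp p)"
  unfolding Zvec_def Rp_def by (simp add: space_PiM)

lemma borel_measurable_continuous_on_Zvec:
  assumes g: "continuous_on (space (Rp p)) g" and Y: "\<And>s. Y s \<in> borel_measurable M"
  shows "(\<lambda>\<omega>. g (Zvec p Y t \<omega>)) \<in> borel_measurable M"
proof -
  have "(\<lambda>\<omega>. Zvec p Y t \<omega>) \<in> borel_measurable M"
    unfolding Zvec_def
  proof (rule measurable_coordinatewise_then_product)
    fix i show "(\<lambda>\<omega>. (\<lambda>i\<in>{..<p}. Y (t - int i) \<omega>) i) \<in> borel_measurable M"
      by (cases "i < p") (auto simp: Y)
  qed
  then have "(\<lambda>\<omega>. Zvec p Y t \<omega>) \<in> M \<rightarrow>\<^sub>M restrict_space borel (space (Rp p))"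
    by (intro measurable_restrict_space2) (auto simp: Zvec_in_space_Rp)
  from measurable_comp[OF this borel_measurable_continuous_on_restrict[OF g]]
  show ?thesis by (simp add: comp_def)
qed

lemma borel_measurable_Delta:
  assumes T: "continuous_on (space (Rp p)) (T \<rho>)" and V: "continuous_on (space (Rp p)) (V \<theta>)"
    and X: "\<And>t. X t \<in> borel_measurable M" and score: "score f \<in> borel_measurable borel"
    and g: "\<And>j. j \<le> k \<Longrightarrow> (\<lambda>\<omega>. g \<omega> j) \<in> borel_measurable M"
  shows "(\<lambda>\<omega>. Delta p k tb T V f n X \<rho> \<theta> (g \<omega>) \<beta> \<omega>) \<in> borel_measurable M"
proof -
  have [measurable]: "(\<lambda>\<omega>. T \<rho> (Zvec p X s \<omega>)) \<in> borel_measurable M"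
    "(\<lambda>\<omega>. V \<theta> (Zvec p X s \<omega>)) \<in> borel_measurable M" "X s \<in> borel_measurable M" for s
    using borel_measurable_continuous_on_Zvec[OF T X] borel_measurable_continuous_on_Zvec[OF V X] X
    by auto
  have [measurable]: "(\<lambda>\<omega>. shiftterm k tb (g \<omega>) t) \<in> borel_measurable M" for t
    unfolding shiftterm_def using g
    by (auto intro!: borel_measurable_sum borel_measurable_times borel_measurable_const)
  note score[measurable]
  show ?thesis
    unfolding Delta_def resid_def by measurable
qed

lemma shiftterm_diff: "shiftterm k tb g t - shiftterm k tb g' t = shiftterm k tb (\<lambda>j. g j - g' j) t"
  unfolding shiftterm_def by (simp add: sum_subtractf left_diff_distrib)

lemma abs_shiftterm_le: "\<bar>shiftterm k tb g t\<bar> \<le> (\<Sum>j\<le>k. \<bar>g j\<bar>)"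
  unfolding shiftterm_def omega_def
  by (rule order_trans[OF sum_abs]) (auto intro!: sum_mono simp: abs_mult)

lemma Delta_diff_under_model:
  fixes p :: nat and X :: "int \<Rightarrow> 'w \<Rightarrow> real" and \<omega> :: 'w
  defines "Z \<equiv> \<lambda>t. Zvec p X (t - 1) \<omega>"
  assumes X: "\<And>t. t \<in> {1..int n} \<Longrightarrow> X t \<omega> = T \<rho> (Z t) + shiftterm k tb \<gamma>0 t + V \<theta> (Z t) * e t"
    and V: "\<And>t. V \<theta> (Z t) \<noteq> 0"
  shows "Delta p k tb T V f n X \<rho> \<theta> \<gamma>0 \<beta> \<omega> - Delta p k tb T V f n X \<rho> \<theta> g \<beta> \<omega>
    = 1 / sqrt (real n) * (\<Sum>t\<in>{1..int n}. shiftterm k tb \<beta> t / V \<theta> (Z t)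
        * (score f (e t) - score f (e t + shiftterm k tb (\<lambda>j. \<gamma>0 j - g j) t / V \<theta> (Z t))))"
proof -
  have resid: "resid p k tb T V X \<rho> \<theta> g' t \<omega> = e t + shiftterm k tb (\<lambda>j. \<gamma>0 j - g' j) t / V \<theta> (Z t)"
    if "t \<in> {1..int n}" for g' t
    using X[OF that] V[of t]
    unfolding resid_def Z_def shiftterm_diff[symmetric] by (simp add: field_simps)
  have "shiftterm k tb (\<lambda>j. 0) t = 0" for t
    by (simp add: shiftterm_def)
  then show ?thesis
    unfolding Delta_def by (simp add: resid Z_def right_diff_distrib sum_subtractf)
qed

lemma inverse_sqrt_scaling:
  fixes n :: nat and x y :: real
  assumes "0 < n"
  shows "1 / sqrt (real n) * (real n * x + y) = sqrt (real n) * (x + y / real n)"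
proof -
  have "real n / sqrt (real n) = sqrt (real n)" "1 / sqrt (real n) = sqrt (real n) / real n"
    using assms by (simp_all add: real_div_sqrt sqrt_divide_self_eq inverse_eq_divide)
  have "1 / sqrt (real n) * (real n * x + y) = real n / sqrt (real n) * x + 1 / sqrt (real n) * y"
    by (simp add: algebra_simps)
  also have "\<dots> = sqrt (real n) * (x + y / real n)"
    unfolding \<open>real n / sqrt (real n) = sqrt (real n)\<close> \<open>1 / sqrt (real n) = sqrt (real n) / real n\<close>
    by (simp add: algebra_simps)
  finally show ?thesis .
qed

lemma abs_Delta_diff_under_model_le:
  fixes p k :: nat and X :: "int \<Rightarrow> 'w \<Rightarrow> real" and \<omega> :: 'w and g \<gamma>0 :: "nat \<Rightarrow> real"
  defines "Z \<equiv> \<lambda>t. Zvec p X (t - 1) \<omega>"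
    and "D \<equiv> (\<Sum>j\<le>k. \<bar>\<gamma>0 j - g j\<bar>)"
  assumes X: "\<And>t. t \<in> {1..int n} \<Longrightarrow> X t \<omega> = T \<rho> (Z t) + shiftterm k tb \<gamma>0 t + V \<theta> (Z t) * e t"
    and V: "\<And>t. \<tau> < V \<theta> (Z t)" and "0 < \<tau>"
    and incr: "\<And>x h. \<bar>score f (x + h) - score f x\<bar> \<le> \<bar>h\<bar> * (L + c * (\<bar>x\<bar> + \<bar>h\<bar>))"
    and "0 \<le> L" "0 \<le> c"
  shows "\<bar>Delta p k tb T V f n X \<rho> \<theta> \<gamma>0 \<beta> \<omega> - Delta p k tb T V f n X \<rho> \<theta> g \<beta> \<omega>\<bar>
    \<le> sqrt (real n) * ((\<Sum>j\<le>k. \<bar>\<beta> j\<bar>) / \<tau> * (D / \<tau>)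
          * (L + c * (D / \<tau>) + c * ((\<Sum>t\<in>{1..int n}. \<bar>e t\<bar>) / real n)))"
proof (cases "n = 0")
  case True
  then show ?thesis by (simp add: Delta_def)
next
  case False
  define A where "A = (\<Sum>j\<le>k. \<bar>\<beta> j\<bar>) / \<tau>"
  define H where "H = D / \<tau>"
  have V_pos: "0 < V \<theta> (Z t)" for t
    using V[of t] \<open>0 < \<tau>\<close> by linarith
  have h_le: "\<bar>shiftterm k tb (\<lambda>j. \<gamma>0 j - g j) t / V \<theta> (Z t)\<bar> \<le> H" for t
  proof -
    have "\<bar>shiftterm k tb (\<lambda>j. \<gamma>0 j - g j) t\<bar> / V \<theta> (Z t) \<le> D / \<tau>"
      using abs_shiftterm_le[of k tb "\<lambda>j. \<gamma>0 j - g j" t] V[of t] \<open>0 < \<tau>\<close> unfolding D_def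
      by (intro frac_le) (auto intro: order_trans[OF abs_ge_zero])
    with V_pos[of t] show ?thesis
      unfolding H_def by (simp add: abs_of_pos)
  qed
  have a_le: "\<bar>shiftterm k tb \<beta> t / V \<theta> (Z t)\<bar> \<le> A" for t
  proof -
    have "\<bar>shiftterm k tb \<beta> t\<bar> / V \<theta> (Z t) \<le> (\<Sum>j\<le>k. \<bar>\<beta> j\<bar>) / \<tau>"
      using abs_shiftterm_le[of k tb \<beta> t] V[of t] \<open>0 < \<tau>\<close>
      by (intro frac_le) (auto intro: order_trans[OF abs_ge_zero])
    with V_pos[of t] show ?thesis
      unfolding A_def by (simp add: abs_of_pos)
  qed
  have sum_le: "\<bar>\<Sum>t\<in>{1..int n}. shiftterm k tb \<beta> t / V \<theta> (Z t)
        * (score f (e t) - score f (e t + shiftterm k tb (\<lambda>j. \<gamma>0 j - g j) t / V \<theta> (Z t)))\<bar>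
      \<le> A * H * (real (card {1..int n}) * (L + c * H) + c * (\<Sum>t\<in>{1..int n}. \<bar>e t\<bar>))"
    by (rule abs_sum_increments_le[OF incr \<open>0 \<le> L\<close> \<open>0 \<le> c\<close>]) (rule a_le h_le)+
  have "Delta p k tb T V f n X \<rho> \<theta> \<gamma>0 \<beta> \<omega> - Delta p k tb T V f n X \<rho> \<theta> g \<beta> \<omega>
      = 1 / sqrt (real n) * (\<Sum>t\<in>{1..int n}. shiftterm k tb \<beta> t / V \<theta> (Z t)
        * (score f (e t) - score f (e t + shiftterm k tb (\<lambda>j. \<gamma>0 j - g j) t / V \<theta> (Z t))))"
    using Delta_diff_under_model[where p = p and X = X and \<omega> = \<omega> and e = e
        and T = T and \<rho> = \<rho> and V = V and \<theta> = \<theta>,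
        OF X[unfolded Z_def] V_pos[unfolded Z_def, THEN less_imp_neq, symmetric]]
    unfolding Z_def .
  then have "\<bar>Delta p k tb T V f n X \<rho> \<theta> \<gamma>0 \<beta> \<omega> - Delta p k tb T V f n X \<rho> \<theta> g \<beta> \<omega>\<bar>
      = 1 / sqrt (real n) * \<bar>\<Sum>t\<in>{1..int n}. shiftterm k tb \<beta> t / V \<theta> (Z t)
        * (score f (e t) - score f (e t + shiftterm k tb (\<lambda>j. \<gamma>0 j - g j) t / V \<theta> (Z t)))\<bar>"
    by (simp add: abs_mult)
  also have "\<dots> \<le> 1 / sqrt (real n) * (A * H * (real n * (L + c * H) + c * (\<Sum>t\<in>{1..int n}. \<bar>e t\<bar>)))"
    using sum_le by (intro mult_left_mono) simp_all
  also have "\<dots> = sqrt (real n) * (A * H * (L + c * H + c * ((\<Sum>t\<in>{1..int n}. \<bar>e t\<bar>) / real n)))"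
    using inverse_sqrt_scaling[of n "A * H * (L + c * H)" "A * H * c * (\<Sum>t\<in>{1..int n}. \<bar>e t\<bar>)"] False
    by (simp add: algebra_simps)
  finally show ?thesis
    unfolding A_def H_def .
qed

lemma abs_Delta_diff_under_model_le_rate:
  fixes p k :: nat and X :: "int \<Rightarrow> 'w \<Rightarrow> real" and \<omega> :: 'w and g \<gamma>0 :: "nat \<Rightarrow> real"
    and s :: real
  defines "Z \<equiv> \<lambda>t. Zvec p X (t - 1) \<omega>"
    and "U \<equiv> (\<Sum>j\<le>k. \<bar>s * (g j - \<gamma>0 j)\<bar>)"
  assumes X: "\<And>t. t \<in> {1..int n} \<Longrightarrow> X t \<omega> = T \<rho> (Z t) + shiftterm k tb \<gamma>0 t + V \<theta> (Z t) * e t"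
    and V: "\<And>t. \<tau> < V \<theta> (Z t)" and "0 < \<tau>" and "1 \<le> s"
    and incr: "\<And>x h. \<bar>score f (x + h) - score f x\<bar> \<le> \<bar>h\<bar> * (L + c * (\<bar>x\<bar> + \<bar>h\<bar>))"
    and "0 \<le> L" "0 \<le> c"
  shows "\<bar>Delta p k tb T V f n X \<rho> \<theta> \<gamma>0 \<beta> \<omega> - Delta p k tb T V f n X \<rho> \<theta> g \<beta> \<omega>\<bar>
    \<le> sqrt (real n) / s * ((\<Sum>j\<le>k. \<bar>\<beta> j\<bar>) / \<tau> * (U / \<tau>)
          * (L + c * (U / \<tau>) + c * ((\<Sum>t\<in>{1..int n}. \<bar>e t\<bar>) / real n)))"
proof -
  define A where "A = (\<Sum>j\<le>k. \<bar>\<beta> j\<bar>) / \<tau>"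
  define Sbar where "Sbar = (\<Sum>t\<in>{1..int n}. \<bar>e t\<bar>) / real n"
  define D where "D = (\<Sum>j\<le>k. \<bar>\<gamma>0 j - g j\<bar>)"
  have D_eq: "D = U / s"
    unfolding D_def U_def using \<open>1 \<le> s\<close>
    by (simp add: abs_mult abs_minus_commute flip: sum_distrib_left)
  have "\<bar>Delta p k tb T V f n X \<rho> \<theta> \<gamma>0 \<beta> \<omega> - Delta p k tb T V f n X \<rho> \<theta> g \<beta> \<omega>\<bar>
      \<le> sqrt (real n) * (A * (D / \<tau>) * (L + c * (D / \<tau>) + c * Sbar))"
    unfolding A_def Sbar_def D_def
    using abs_Delta_diff_under_model_le[where p = p and X = X and \<omega> = \<omega> and e = e and g = g
        and T = T and \<rho> = \<rho> and V = V and \<theta> = \<theta>,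
        OF X[unfolded Z_def] V[unfolded Z_def] \<open>0 < \<tau>\<close> incr
        \<open>0 \<le> L\<close> \<open>0 \<le> c\<close>] .
  also have "\<dots> \<le> sqrt (real n) * (A * (D / \<tau>) * (L + c * (U / \<tau>) + c * Sbar))"
  proof -
    have "0 \<le> U"
      unfolding U_def by (simp add: sum_nonneg)
    then have "U / s \<le> U"
      using frac_le[of U U 1 s] \<open>1 \<le> s\<close> by simp
    then have "D / \<tau> \<le> U / \<tau>"
      unfolding D_eq using \<open>0 < \<tau>\<close> by (intro divide_right_mono) auto
    moreover have "0 \<le> A * (D / \<tau>)"
      unfolding A_def D_def using \<open>0 < \<tau>\<close> by (auto intro!: sum_nonneg)
    moreover have "L + c * (D / \<tau>) + c * Sbar \<le> L + c * (U / \<tau>) + c * Sbar"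
      using mult_left_mono[OF \<open>D / \<tau> \<le> U / \<tau>\<close> \<open>0 \<le> c\<close>] by linarith
    ultimately show ?thesis
      by (intro mult_left_mono) auto
  qed
  also have "\<dots> = sqrt (real n) / s * (A * (U / \<tau>) * (L + c * (U / \<tau>) + c * Sbar))"
    unfolding D_eq using \<open>1 \<le> s\<close> by (simp add: field_simps)
  finally show ?thesis
    unfolding A_def Sbar_def .
qed

lemma filterlim_at_top_if_ratio_tendsto_zero:
  fixes N :: "nat \<Rightarrow> nat"
  assumes "\<And>n. 0 < N n" and "(\<lambda>n. real n / real (N n)) \<longlonglongrightarrow> 0"
  shows "filterlim N at_top sequentially"
proof (rule filterlim_at_top_mono[OF filterlim_ident])
  have "eventually (\<lambda>n. real n / real (N n) < 1) sequentially"
    using assms(2) by (intro order_tendstoD) auto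
  then show "eventually (\<lambda>n. n \<le> N n) sequentially"
    by eventually_elim (use assms(1) in \<open>simp add: divide_less_eq\<close>)
qed

theorem lemma2:
  fixes M :: "'w measure"
    and p k :: nat
    and tb :: "nat \<Rightarrow> nat \<Rightarrow> nat"
    and T :: "real^'l \<Rightarrow> (nat \<Rightarrow> real) \<Rightarrow> real"
    and V :: "real^'q \<Rightarrow> (nat \<Rightarrow> real) \<Rightarrow> real"
    and \<Theta> :: "(real^'l) set" and \<Theta>' :: "(real^'q) set"
    and \<rho>0 :: "real^'l" and \<theta>0 :: "real^'q"
    and \<gamma>0 :: "nat \<Rightarrow> real"
    and f :: "real \<Rightarrow> real"
    and X \<epsilon> :: "nat \<Rightarrow> int \<Rightarrow> 'w \<Rightarrow> real"
    and F :: "nat \<Rightarrow> (nat \<Rightarrow> real) measure"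
    and \<delta> :: real
    and \<psi>n :: "nat \<Rightarrow> 'w \<Rightarrow> (real^'l) \<times> (real^'q)"
    and N :: "nat \<Rightarrow> nat"
    and \<gamma>h :: "nat \<Rightarrow> 'w \<Rightarrow> (nat \<Rightarrow> real)"
    and \<beta> :: "nat \<Rightarrow> real"
  assumes "1 \<le> p"
    and "\<rho>0 \<in> \<Theta>" and "\<theta>0 \<in> \<Theta>'"
    and H0: "model M p k tb T V \<rho>0 \<theta>0 \<gamma>0 f X \<epsilon>"
    and A: "assm_A f"
    and A5: "assm_A5 k tb"
    and A6: "assm_A6 M p k tb X F"
    and A7: "assm_A7 k f V \<theta>0 F"
    and B0: "assm_B0 p \<Theta>' V"
    and "0 \<le> \<delta>"
    and B1: "assm_B1 p k F \<delta>"
    and B2: "assm_B2 f"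
    and B3: "assm_B3 p k \<Theta> \<Theta>' T V \<rho>0 \<theta>0 F"
    and B4: "assm_B4 M p k X \<epsilon> f \<rho>0 \<theta>0 F \<delta> \<psi>n"
    and N_pos: "\<forall>n. 0 < N n"
    and N_lim: "(\<lambda>n. real n / real (N n)) \<longlonglongrightarrow> 0"
    and est: "consistent_asymp_normal M k \<gamma>h \<gamma>0"
  shows "conv_prob M
           (\<lambda>n \<omega>. Delta p k (tb n) T V f n (X n) \<rho>0 \<theta>0 \<gamma>0 \<beta> \<omega>
                  - Delta p k (tb n) T V f n (X n) \<rho>0 \<theta>0 (\<gamma>h (N n) \<omega>) \<beta> \<omega>) 0"
proof -
  have M: "prob_space M" and f_nonneg: "\<And>x. 0 \<le> f x"
    and X_meas: "\<And>n t. X n t \<in> borel_measurable M"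
    and X_eq: "\<And>n t \<omega>. t \<in> {1..int n} \<Longrightarrow> \<omega> \<in> space M \<Longrightarrow> X n t \<omega> = T \<rho>0 (Zvec p (X n) (t - 1) \<omega>)
        + shiftterm k (tb n) \<gamma>0 t + V \<theta>0 (Zvec p (X n) (t - 1) \<omega>) * \<epsilon> n t \<omega>"
    and \<epsilon>_distr: "\<And>n t. t \<in> {1..int n} \<Longrightarrow> distributed M lborel (\<epsilon> n t) (\<lambda>x. ennreal (f x))"
    using H0 unfolding model_def by auto
  obtain \<tau> where "0 < \<tau>" and V_gt: "\<And>z. z \<in> space (Rp p) \<Longrightarrow> \<tau> < V \<theta>0 z"
    using B0 \<open>\<theta>0 \<in> \<Theta>'\<close> unfolding assm_B0_def by blast
  have T_cont: "continuous_on (space (Rp p)) (T \<rho>0)" and V_cont: "continuous_on (space (Rp p)) (V \<theta>0)"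
    using B3 \<open>\<rho>0 \<in> \<Theta>\<close> \<open>\<theta>0 \<in> \<Theta>'\<close> unfolding assm_B3_def by blast+
  have score_diff: "score f differentiable_on UNIV" and "integrable lborel (\<lambda>x. x * f x)"
    using A unfolding assm_A_def by blast+
  obtain c where "0 < c" and score_lip: "c-lipschitz_on UNIV (deriv (score f))"
    using A unfolding assm_A_def by blast
  have \<gamma>h_meas: "\<And>m j. j \<le> k \<Longrightarrow> (\<lambda>\<omega>. \<gamma>h m \<omega> j) \<in> borel_measurable M"
    using est unfolding consistent_asymp_normal_def conv_prob_def by blast
  have N_at_top: "filterlim N at_top sequentially"
    using N_pos N_lim by (intro filterlim_at_top_if_ratio_tendsto_zero) auto
  define L where "L = \<bar>deriv (score f) 0\<bar>"
  define U where "U n \<omega> = (\<Sum>j\<le>k. \<bar>sqrt (real (N n)) * (\<gamma>h (N n) \<omega> j - \<gamma>0 j)\<bar>)" for n \<omega>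
  define S where "S n \<omega> = (\<Sum>t\<in>{1..int n}. \<bar>\<epsilon> n t \<omega>\<bar>) / real n" for n \<omega>
  define W where "W n \<omega> = (\<Sum>j\<le>k. \<bar>\<beta> j\<bar>) / \<tau> * (U n \<omega> / \<tau>) * (L + c * (U n \<omega> / \<tau>) + c * S n \<omega>)"
    for n \<omega>
  have "bounded_in_prob M (\<lambda>n \<omega>. sqrt (real (N n)) * (\<gamma>h (N n) \<omega> j - \<gamma>0 j))" if "j \<le> k" for j
    using bounded_in_prob_reindex[OF consistent_asymp_normal_root_n_bounded[OF M est that] N_at_top] .
  then have "bounded_in_prob M U"
    unfolding U_def by (intro bounded_in_prob_sum[OF M] bounded_in_prob_abs) auto
  then have U_div: "bounded_in_prob M (\<lambda>n \<omega>. U n \<omega> / \<tau>)"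
    using bounded_in_prob_mult[OF M _ bounded_in_prob_const[of M "1 / \<tau>"]] by simp
  have "bounded_in_prob M S"
    unfolding S_def using \<epsilon>_distr f_nonneg \<open>integrable lborel (\<lambda>x. x * f x)\<close>
    by (rule bounded_in_prob_mean_abs_innovations[OF M])
  with U_div have "bounded_in_prob M W"
    unfolding W_def by (intro bounded_in_prob_mult[OF M] bounded_in_prob_add[OF M] bounded_in_prob_const)
  show ?thesis
  proof (rule conv_prob_zero_if_vanishing_times_bounded[OF M _ \<open>bounded_in_prob M W\<close>])
    have "score f \<in> borel_measurable borel"
      using score_diff by (intro borel_measurable_continuous_onI differentiable_imp_continuous_on)
    then show "(\<lambda>\<omega>. Delta p k (tb n) T V f n (X n) \<rho>0 \<theta>0 \<gamma>0 \<beta> \<omega>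
        - Delta p k (tb n) T V f n (X n) \<rho>0 \<theta>0 (\<gamma>h (N n) \<omega>) \<beta> \<omega>) \<in> borel_measurable M" for n
      using borel_measurable_Delta[where T = T and \<rho> = \<rho>0 and V = V and \<theta> = \<theta>0,
          OF T_cont V_cont X_meas[of n]] \<gamma>h_meas
      by (intro borel_measurable_diff) auto
    show "(\<lambda>n. sqrt (real n / real (N n))) \<longlonglongrightarrow> 0"
      using tendsto_real_sqrt[OF N_lim] by simp
    fix n \<omega> assume "\<omega> \<in> space M"
    have "1 \<le> sqrt (real (N n))"
      using N_pos by (simp add: Suc_le_eq)
    from abs_Delta_diff_under_model_le_rate[where p = p and X = "X n" and \<omega> = \<omega> and e = "\<lambda>t. \<epsilon> n t \<omega>"
        and g = "\<gamma>h (N n) \<omega>" and T = T and \<rho> = \<rho>0 and V = V and \<theta> = \<theta>0,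
        OF X_eq[OF _ \<open>\<omega> \<in> space M\<close>] V_gt[OF Zvec_in_space_Rp] \<open>0 < \<tau>\<close> this
        abs_diff_le_of_lipschitz_deriv[OF score_diff score_lip]] \<open>0 < c\<close>
    show "\<bar>Delta p k (tb n) T V f n (X n) \<rho>0 \<theta>0 \<gamma>0 \<beta> \<omega>
        - Delta p k (tb n) T V f n (X n) \<rho>0 \<theta>0 (\<gamma>h (N n) \<omega>) \<beta> \<omega>\<bar> \<le> sqrt (real n / real (N n)) * W n \<omega>"
      by (simp add: W_def U_def S_def L_def real_sqrt_divide mult.assoc)
  qed simp
qed

end
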